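(* Let $\Gamma$ be a finite alphabet totally ordered via a valuation $v:\Gamma\to\mathbb{Z}$, and let $M_\Gamma$ be the set of $m$-words over $\Gamma$. Let $p,r\in\Gamma$ be arbitrary symbols and let $w_1,w_2$ be words over $\Gamma$ (one of which may be empty) such that $w=w_1\cdot p\cdot r\cdot p\cdot w_2\in M_\Gamma$. Then \[ w_1\cdot p\cdot r\cdot p\cdot w_2 \;=_{zip}\; w_1\cdot p\cdot w_2 . \]
   Context: $\Gamma$ is a finite set of symbols with a valuation $v:\Gamma\to\mathbb{Z}$ inducing a total order ($a<_\Gamma b$ iff $v(a)<v(b)$). An $m$-word is a word over $\Gamma$ of even (positive) length; $M_\Gamma$ is the set of all $m$-words, closed under concatenation $\cdot$. For $r,s\in\Gamma$ the distance is $\delta(r,s)=|v(r)-v(s)|$. The $\lambda$-length of an $m$-word $a_1a_2\cdots a_{2n}$ is the alternating sum $\lambda(a_1\cdots a_{2n})=-\delta(a_1,a_2)+\delta(a_2,a_3)-\delta(a_3,a_4)+\cdots-\delta(a_{2n-1},a_{2n})$. The compression relation $=_{zip}$ on $M_\Gamma$ is the equivalence relation obtained from the elementary rule: for all $p,r,s,t\in\Gamma$, $p\cdot r\cdot s\cdot t=_{zip}p\cdot t$ whenever $\lambda(p\cdot r\cdot s\cdot t)=\lambda(p\cdot t)$, applied iteratively to subwords and required to be preserved under concatenation: for all $w_1,w_2,w_3,w_4\in M_\Gamma$, if $w_1=_{zip}w_2$ and $w_3=_{zip}w_4$ then $w_1w_3=_{zip}w_2w_4$. *)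

theory Defs
  imports Main
begin

definition mwords :: "'a set \<Rightarrow> 'a list set" where
  "mwords \<Gamma> = {w. set w \<subseteq> \<Gamma> \<and> even (length w) \<and> length w > 0}"

definition sdist :: "('a \<Rightarrow> int) \<Rightarrow> 'a \<Rightarrow> 'a \<Rightarrow> int" where
  "sdist v r s = \<bar>v r - v s\<bar>"

fun lam :: "('a \<Rightarrow> int) \<Rightarrow> 'a list \<Rightarrow> int" where
  "lam v (a # b # c # rest) = - sdist v a b + sdist v b c + lam v (c # rest)"
| "lam v [a, b] = - sdist v a b"
| "lam v _ = 0"

inductive zipeq :: "'a set \<Rightarrow> ('a \<Rightarrow> int) \<Rightarrow> 'a list \<Rightarrow> 'a list \<Rightarrow> bool"
  for \<Gamma> :: "'a set" and v :: "'a \<Rightarrow> int" where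
  elem: "\<lbrakk>p \<in> \<Gamma>; r \<in> \<Gamma>; s \<in> \<Gamma>; t \<in> \<Gamma>; lam v [p, r, s, t] = lam v [p, t]\<rbrakk>
           \<Longrightarrow> zipeq \<Gamma> v [p, r, s, t] [p, t]"
| refl: "w \<in> mwords \<Gamma> \<Longrightarrow> zipeq \<Gamma> v w w"
| sym: "zipeq \<Gamma> v w1 w2 \<Longrightarrow> zipeq \<Gamma> v w2 w1"
| trans: "zipeq \<Gamma> v w1 w2 \<Longrightarrow> zipeq \<Gamma> v w2 w3 \<Longrightarrow> zipeq \<Gamma> v w1 w3"
| concat: "zipeq \<Gamma> v w1 w2 \<Longrightarrow> zipeq \<Gamma> v w3 w4 \<Longrightarrow> zipeq \<Gamma> v (w1 @ w3) (w2 @ w4)"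

end

theory Submission
  imports Defs
begin

text \<open>A backtrack \<open>p r p\<close> does not change the \<open>\<lambda>\<close>-length, since the two steps
  \<open>\<delta>(p,r)\<close> and \<open>\<delta>(r,p)\<close> enter with opposite signs. The elementary rule only
  rewrites blocks of four letters starting at an odd position, so the backtrack is
  completed by its right neighbour (\<open>p r p \<cdot> b\<close>) if \<open>w\<^sub>1\<close> has even length and by its
  left neighbour (\<open>a \<cdot> p r p\<close>) otherwise; the rest of the word is an even-length
  context, which is compatible with \<open>=\<^sub>z\<^sub>i\<^sub>p\<close>.\<close>

lemma zipeq_refl_even:
  assumes "set u \<subseteq> \<Gamma>" and "even (length u)" and "u \<noteq> []"
  shows "zipeq \<Gamma> v u u"
  using assms by (intro zipeq.refl) (simp add: mwords_def)

lemma zipeq_append_left: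
  assumes "zipeq \<Gamma> v x y" and "set u \<subseteq> \<Gamma>" and "even (length u)"
  shows "zipeq \<Gamma> v (u @ x) (u @ y)"
proof (cases "u = []")
  case False
  with assms show ?thesis by (intro zipeq.concat zipeq_refl_even)
qed (use assms in simp)

lemma zipeq_append_right:
  assumes "zipeq \<Gamma> v x y" and "set u \<subseteq> \<Gamma>" and "even (length u)"
  shows "zipeq \<Gamma> v (x @ u) (y @ u)"
proof (cases "u = []")
  case False
  with assms show ?thesis by (intro zipeq.concat zipeq_refl_even)
qed (use assms in simp)

lemma zipeq_in_context:
  assumes "zipeq \<Gamma> v x y"
    and "set u \<subseteq> \<Gamma>" and "even (length u)" and "set u' \<subseteq> \<Gamma>" and "even (length u')"
  shows "zipeq \<Gamma> v (u @ x @ u') (u @ y @ u')"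
  using assms by (intro zipeq_append_left zipeq_append_right)

lemma zipeq_backtrack_followed:
  assumes "p \<in> \<Gamma>" and "r \<in> \<Gamma>" and "b \<in> \<Gamma>"
  shows "zipeq \<Gamma> v [p, r, p, b] [p, b]"
  using assms by (intro zipeq.elem) (auto simp: sdist_def)

lemma zipeq_backtrack_preceded:
  assumes "a \<in> \<Gamma>" and "p \<in> \<Gamma>" and "r \<in> \<Gamma>"
  shows "zipeq \<Gamma> v [a, p, r, p] [a, p]"
  using assms by (intro zipeq.elem) (auto simp: sdist_def)

theorem proposition1:
  fixes \<Gamma> :: "'a set" and v :: "'a \<Rightarrow> int"
    and p r :: 'a and w1 w2 :: "'a list"
  assumes "finite \<Gamma>" and "inj_on v \<Gamma>"
    and "p \<in> \<Gamma>" and "r \<in> \<Gamma>"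
    and "set w1 \<subseteq> \<Gamma>" and "set w2 \<subseteq> \<Gamma>"
    and "w1 @ [p, r, p] @ w2 \<in> mwords \<Gamma>"
  shows "zipeq \<Gamma> v (w1 @ [p, r, p] @ w2) (w1 @ [p] @ w2)"
proof (cases "even (length w1)")
  case True
  with assms(7) obtain b w2' where w2: "w2 = b # w2'" and "even (length w2')"
    by (cases w2) (auto simp: mwords_def)
  with assms True have "zipeq \<Gamma> v (w1 @ [p, r, p, b] @ w2') (w1 @ [p, b] @ w2')"
    by (intro zipeq_in_context zipeq_backtrack_followed) auto
  with w2 show ?thesis by simp
next
  case False
  then obtain w1' a where w1: "w1 = w1' @ [a]" and "even (length w1')"
    by (cases w1 rule: rev_cases) auto
  moreover from assms(7) w1 \<open>even (length w1')\<close> have "even (length w2)"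
    by (simp add: mwords_def)
  ultimately have "zipeq \<Gamma> v (w1' @ [a, p, r, p] @ w2) (w1' @ [a, p] @ w2)"
    using assms by (intro zipeq_in_context zipeq_backtrack_preceded) auto
  with w1 show ?thesis by simp
qed

end
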